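(* Let $k\in\{1,\dots,n\}$, let $\nu$ be an $n$-colorless partition with $\nu_1<n$, and let $\mu$ be a partition with $\mu_1<n$ (so $\nu'_n=\mu'_n=0$). Let $\tau\in\mathfrak S_n$ be the permutation determined by $\tau(\overline{\nu'_j-j+k})=j$ for $1\le j\le n$. For $l=2,\dots,n$ let $\nu_{\ge l}$ be the partition conjugate to $(\nu'_l,\nu'_{l+1},\dots,\nu'_n)$. Consider the finite collection of colored partitions consisting, for each $l=2,\dots,n$, of $\mu'_{l-1}-\mu'_l$ copies of $\nu_{\ge l}$, in which the box $(x,y)$ carries color $\overline{k-l+1+x-y}$. For $j\in\{1,\dots,n\}$, let $\sharp(CC_j)$ (resp. $\sharp(CV_j)$) be the total number, over this collection, of concave (resp. convex) corners of color $j$. Then for all $j\in\{1,\dots,n\}$, $$\sharp(CC_j)-\sharp(CV_j)=\mu'_{\tau(j)}-\mu'_{\tau(j-1)}+\mu'_1\delta_{j,k},$$ where $\tau(0)$ means $\tau(n)$.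
   Context: Fix $n\ge3$. For an integer $a$, $\overline a\in\{1,\dots,n\}$ denotes its representative mod $n$; colors are read mod $n$ in $\{1,\dots,n\}$. A partition $\nu$ is $n$-colorless if, for every residue $i$ mod $n$, the number of boxes $(x,y)$ ($\nu_x\ge y$) with $x-y\equiv i$ is the same. For such $\nu$ with $\nu_1<n$, the integers $\nu'_j-j+k$ ($1\le j\le n$) are pairwise distinct mod $n$, so $\tau$ is well-defined. Corners of a partition $\gamma$ with conjugate $\gamma'$: - $(x,y)\in\mathbb Z_{\ge1}^2$ is a convex corner if $\gamma'_{y+1}<\gamma'_y=x$; - $(x,y)$ is a concave corner if $\gamma'_y=x-1$ and either $y=1$ or $\gamma'_{y-1}>x-1$. The color of a corner $(x,y)$ is the color assigned to position $(x,y)$ by the rule stated in the claim. *)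

theory Defs
  imports Main
begin

text \<open>Partitions are represented as functions p :: nat => nat, where p x is the
  length of row x for x >= 1 (the value at index 0 is irrelevant).\<close>

definition is_partition :: "(nat \<Rightarrow> nat) \<Rightarrow> bool" where
  "is_partition p \<longleftrightarrow> (\<forall>i\<ge>1. p (Suc i) \<le> p i) \<and> (\<exists>N. \<forall>i\<ge>N. p i = 0)"

text \<open>Conjugate partition: column lengths (meaningful for y >= 1).\<close>
definition conj :: "(nat \<Rightarrow> nat) \<Rightarrow> nat \<Rightarrow> nat" where
  "conj p y = card {x. 1 \<le> x \<and> y \<le> p x}"

definition boxes :: "(nat \<Rightarrow> nat) \<Rightarrow> (nat \<times> nat) set" where
  "boxes p = {(x, y). 1 \<le> x \<and> 1 \<le> y \<and> y \<le> p x}"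

definition rep :: "nat \<Rightarrow> int \<Rightarrow> int" where
  "rep n a = (a - 1) mod int n + 1"

definition colorless :: "nat \<Rightarrow> (nat \<Rightarrow> nat) \<Rightarrow> bool" where
  "colorless n p \<longleftrightarrow> (\<forall>i j :: int.
     card {(x, y) \<in> boxes p. (int x - int y) mod int n = i mod int n}
   = card {(x, y) \<in> boxes p. (int x - int y) mod int n = j mod int n})"

definition tau :: "nat \<Rightarrow> nat \<Rightarrow> (nat \<Rightarrow> nat) \<Rightarrow> int \<Rightarrow> nat" where
  "tau n k nu c = (THE j. j \<in> {1..n} \<and> rep n (int (conj nu j) - int j + int k) = c)"

definition trunc_part :: "nat \<Rightarrow> (nat \<Rightarrow> nat) \<Rightarrow> nat \<Rightarrow> (nat \<Rightarrow> nat)" where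
  "trunc_part n nu l = conj (\<lambda>y. if 1 \<le> y \<and> y \<le> n + 1 - l then conj nu (l + y - 1) else 0)"

definition convex_corners :: "(nat \<Rightarrow> nat) \<Rightarrow> (nat \<times> nat) set" where
  "convex_corners g = {(x, y). 1 \<le> x \<and> 1 \<le> y \<and> conj g (y + 1) < conj g y \<and> conj g y = x}"

definition concave_corners :: "(nat \<Rightarrow> nat) \<Rightarrow> (nat \<times> nat) set" where
  "concave_corners g = {(x, y). 1 \<le> x \<and> 1 \<le> y \<and> int (conj g y) = int x - 1 \<and>
       (y = 1 \<or> int (conj g (y - 1)) > int x - 1)}"

definition corner_color :: "nat \<Rightarrow> nat \<Rightarrow> nat \<Rightarrow> nat \<times> nat \<Rightarrow> int" where
  "corner_color n k l xy = rep n (int k - int l + 1 + int (fst xy) - int (snd xy))"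

definition num_CC :: "nat \<Rightarrow> nat \<Rightarrow> (nat \<Rightarrow> nat) \<Rightarrow> (nat \<Rightarrow> nat) \<Rightarrow> int \<Rightarrow> int" where
  "num_CC n k nu mu j = (\<Sum>l = 2..n. (int (conj mu (l - 1)) - int (conj mu l)) *
      int (card {c \<in> concave_corners (trunc_part n nu l). corner_color n k l c = j}))"

definition num_CV :: "nat \<Rightarrow> nat \<Rightarrow> (nat \<Rightarrow> nat) \<Rightarrow> (nat \<Rightarrow> nat) \<Rightarrow> int \<Rightarrow> int" where
  "num_CV n k nu mu j = (\<Sum>l = 2..n. (int (conj mu (l - 1)) - int (conj mu l)) *
      int (card {c \<in> convex_corners (trunc_part n nu l). corner_color n k l c = j}))"

end

theory Submission
  imports Defs
begin

text \<open>
  The columns of \<nu>\<ge>l are \<nu>'(l), ..., \<nu>'(n). Its concave corners sit on top of the columns that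
  start a new height and its convex corners on top of the columns (other than the last) where the
  height drops; in both cases the colour is determined by the content \<nu>'(m) - m of the column m of \<nu>.
  When two neighbouring columns have equal height, the concave term of the right one has the colour of
  the convex term of the left one, so counting a concave term for every column m \<in> [l, n] and a convex
  term for every m \<in> [l, n) gives the same difference. Counting the boxes of colours i and i - 1
  column by column shows that colorlessness makes the contents \<nu>'(m) - m, 1 \<le> m \<le> n, pairwise
  distinct mod n, so each of these counts is the indicator of l \<le> \<tau>(-). Weighting by
  \<mu>'(l - 1) - \<mu>'(l) and summing over l telescopes to \<mu>'(1) - \<mu>'(\<tau>(-)), and the extra term
  \<mu>'(1) \<delta>(j, k) appears because \<tau>(j) = n exactly when j = k.
\<close>

section \<open>Partitions and their conjugates\<close>

lemma partition_antimono:
  assumes "is_partition p" "1 \<le> i" "i \<le> j"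
  shows "p j \<le> p i"
  using assms(3)
proof (induction j rule: dec_induct)
  case (step m)
  then show ?case using assms(1,2) unfolding is_partition_def by (meson order.trans)
qed simp

lemma finite_rows_reaching:
  assumes "is_partition p" "1 \<le> y"
  shows "finite {x. 1 \<le> x \<and> y \<le> p x}"
proof -
  obtain N where "\<forall>i\<ge>N. p i = 0" using assms(1) unfolding is_partition_def by auto
  then have "{x. 1 \<le> x \<and> y \<le> p x} \<subseteq> {..<N}" using assms(2) by (auto simp: not_le[symmetric])
  then show ?thesis by (rule finite_subset) simp
qed

lemma down_closed_eq_atLeastAtMost:
  fixes S :: "nat set"
  assumes "finite S" "\<forall>x\<in>S. 1 \<le> x" "\<And>x y. 1 \<le> x \<Longrightarrow> x \<le> y \<Longrightarrow> y \<in> S \<Longrightarrow> x \<in> S"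
  shows "S = {1..card S}"
proof (cases "S = {}")
  case False
  then have "Max S \<in> S" using assms(1) by simp
  have "S = {1..Max S}"
  proof
    show "S \<subseteq> {1..Max S}" using assms(1,2) by auto
    show "{1..Max S} \<subseteq> S" using assms(3) \<open>Max S \<in> S\<close> by auto
  qed
  then show ?thesis by (metis card_atLeastAtMost diff_Suc_1)
qed simp

lemma rows_reaching_eq:
  assumes "is_partition p" "1 \<le> y"
  shows "{x. 1 \<le> x \<and> y \<le> p x} = {1..conj p y}"
  unfolding conj_def
proof (rule down_closed_eq_atLeastAtMost)
  show "finite {x. 1 \<le> x \<and> y \<le> p x}" using finite_rows_reaching assms .
  show "\<forall>x\<in>{x. 1 \<le> x \<and> y \<le> p x}. 1 \<le> x" by simp
  fix x z assume "1 \<le> x" "x \<le> z" "z \<in> {x. 1 \<le> x \<and> y \<le> p x}"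
  then show "x \<in> {x. 1 \<le> x \<and> y \<le> p x}" using partition_antimono[OF assms(1), of x z] by simp
qed

lemma le_conj_iff:
  assumes "is_partition p" "1 \<le> x" "1 \<le> y"
  shows "x \<le> conj p y \<longleftrightarrow> y \<le> p x"
  using rows_reaching_eq[OF assms(1,3)] assms(2) by (metis (mono_tags, lifting) atLeastAtMost_iff mem_Collect_eq)

lemma conj_antimono:
  assumes "is_partition p" "1 \<le> y" "y \<le> y'"
  shows "conj p y' \<le> conj p y"
  unfolding conj_def using assms(3) by (intro card_mono finite_rows_reaching[OF assms(1,2)]) auto

lemma conj_conj:
  assumes "is_partition p" "1 \<le> x"
  shows "conj (conj p) x = p x"
proof -
  have "{y. 1 \<le> y \<and> x \<le> conj p y} = {1..p x}"
    using le_conj_iff[OF assms(1) assms(2)] by auto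
  then show ?thesis unfolding conj_def[of "conj p"] by simp
qed

lemma conj_eq_0:
  assumes "is_partition p" "p 1 < y"
  shows "conj p y = 0"
proof -
  have "{x. 1 \<le> x \<and> y \<le> p x} = {}"
    using partition_antimono[OF assms(1), of 1] assms(2) by fastforce
  then show ?thesis unfolding conj_def by (simp only: card.empty)
qed

lemma conj_trunc_part:
  assumes "is_partition nu" "1 \<le> l" "1 \<le> y"
  shows "conj (trunc_part n nu l) y = (if y \<le> n + 1 - l then conj nu (l + y - 1) else 0)"
proof -
  define f where "f y = (if 1 \<le> y \<and> y \<le> n + 1 - l then conj nu (l + y - 1) else 0)" for y
  have "is_partition f"
    unfolding is_partition_def
  proof
    show "\<forall>i\<ge>1. f (Suc i) \<le> f i"
      using conj_antimono[OF assms(1)] assms(2) by (simp add: f_def)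
    show "\<exists>N. \<forall>i\<ge>N. f i = 0" by (rule exI[of _ "n + 2"]) (auto simp: f_def)
  qed
  then have "conj (conj f) y = f y" using conj_conj assms(3) by blast
  then show ?thesis using assms(3) by (simp add: trunc_part_def f_def[abs_def])
qed

lemma conj_trunc_part_eq_0:
  assumes "is_partition nu" "nu 1 < n" "1 \<le> l" "l \<le> n" "n + 1 - l \<le> y"
  shows "conj (trunc_part n nu l) y = 0"
  using conj_trunc_part[OF assms(1,3), of y n] conj_eq_0[OF assms(1,2)] assms(3-5) by auto

lemma conj_trunc_part_antimono:
  assumes "is_partition nu" "1 \<le> l" "1 \<le> y"
  shows "conj (trunc_part n nu l) (Suc y) \<le> conj (trunc_part n nu l) y"
  using conj_trunc_part[OF assms(1,2)] conj_antimono[OF assms(1), of "l + y - 1" "l + Suc y - 1"] assms(2,3)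
  by simp

section \<open>Corners of the truncated partitions\<close>

lemma concave_corners_eq_image:
  assumes "1 \<le> N" "\<forall>y\<ge>N. conj g y = 0"
  shows "concave_corners g
    = (\<lambda>y. (conj g y + 1, y)) ` {y \<in> {1..N}. y = 1 \<or> conj g y < conj g (y - 1)}"
proof (intro equalityI subsetI)
  fix z assume "z \<in> concave_corners g"
  then obtain x y where z: "z = (x, y)" "1 \<le> y" "x = conj g y + 1"
      and corner: "y = 1 \<or> conj g y < conj g (y - 1)"
    unfolding concave_corners_def by auto
  have "y \<le> N"
  proof (rule ccontr)
    assume "\<not> y \<le> N"
    then have "y \<noteq> 1" "conj g y = 0" "conj g (y - 1) = 0" using assms by auto
    then show False using corner by simp
  qed
  then show "z \<in> (\<lambda>y. (conj g y + 1, y)) ` {y \<in> {1..N}. y = 1 \<or> conj g y < conj g (y - 1)}"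
    using z corner by auto
qed (auto simp: concave_corners_def)

lemma convex_corners_eq_image:
  assumes "\<forall>y\<ge>N. conj g y = 0"
  shows "convex_corners g = (\<lambda>y. (conj g y, y)) ` {y \<in> {1..<N}. conj g (Suc y) < conj g y}"
proof (intro equalityI subsetI)
  fix z assume "z \<in> convex_corners g"
  then obtain y where z: "z = (conj g y, y)" "1 \<le> y" and corner: "conj g (Suc y) < conj g y"
    unfolding convex_corners_def by auto
  then have "y < N" using assms by (metis not_le not_less_zero)
  then show "z \<in> (\<lambda>y. (conj g y, y)) ` {y \<in> {1..<N}. conj g (Suc y) < conj g y}"
    using z corner by auto
qed (auto simp: convex_corners_def)

lemma int_card_filter_eq_sum:
  "finite A \<Longrightarrow> int (card {x \<in> A. P x}) = (\<Sum>x\<in>A. if P x then 1 else 0)"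
  by (simp add: sum.inter_filter[symmetric])

lemma card_filter_image_eq_sum:
  assumes "finite Y" "inj_on h Y"
  shows "int (card {z \<in> h ` {y \<in> Y. Q y}. P z}) = (\<Sum>y\<in>Y. if Q y then of_bool (P (h y)) else 0)"
proof -
  have "{z \<in> h ` {y \<in> Y. Q y}. P z} = h ` {y \<in> Y. Q y \<and> P (h y)}" by auto
  moreover have "inj_on h {y \<in> Y. Q y \<and> P (h y)}" using assms(2) by (rule inj_on_subset) auto
  ultimately have "card {z \<in> h ` {y \<in> Y. Q y}. P z} = card {y \<in> Y. Q y \<and> P (h y)}"
    by (simp add: card_image)
  also have "int \<dots> = (\<Sum>y\<in>Y. of_bool (Q y \<and> P (h y)))"
    using assms(1) by (simp add: Int_def)
  also have "\<dots> = (\<Sum>y\<in>Y. if Q y then of_bool (P (h y)) else 0)"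
    by (rule sum.cong) auto
  finally show ?thesis .
qed

lemma card_colored_concave_corners:
  assumes "1 \<le> N" "\<forall>y\<ge>N. conj g y = 0"
  shows "int (card {z \<in> concave_corners g. col z = j})
    = (\<Sum>y=1..N. if y = 1 \<or> conj g y < conj g (y - 1) then of_bool (col (conj g y + 1, y) = j) else 0)"
  unfolding concave_corners_eq_image[OF assms]
  by (rule card_filter_image_eq_sum) (auto intro: inj_onI)

lemma card_colored_convex_corners:
  assumes "\<forall>y\<ge>N. conj g y = 0"
  shows "int (card {z \<in> convex_corners g. col z = j})
    = (\<Sum>y=1..<N. if conj g (Suc y) < conj g y then of_bool (col (conj g y, y) = j) else 0)"
  unfolding convex_corners_eq_image[OF assms]
  by (rule card_filter_image_eq_sum) (auto intro: inj_onI)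

lemma sum_corner_terms_telescope:
  fixes G :: "nat \<Rightarrow> nat" and A B :: "nat \<Rightarrow> int"
  assumes "\<And>y. 1 \<le> y \<Longrightarrow> G (Suc y) \<le> G y"
    and "\<And>y. G (Suc y) = G y \<Longrightarrow> A (Suc y) = B y"
  shows "(\<Sum>y=1..N. if y = 1 \<or> G y < G (y - 1) then A y else 0)
       - (\<Sum>y=1..<N. if G (Suc y) < G y then B y else 0)
       = (\<Sum>y=1..N. A y) - (\<Sum>y=1..<N. B y)"
proof (induction N)
  case (Suc N)
  have step: "G (Suc N) < G N \<or> A (Suc N) = B N" if "1 \<le> N"
    using assms(1)[OF that] assms(2)[of N] by linarith
  show ?case
  proof (cases "N = 0")
    case False
    then show ?thesis using Suc.IH step by (simp add: atLeastLessThanSuc) blast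
  qed simp
qed simp

lemma sum_columns_trunc_part:
  fixes f :: "nat \<Rightarrow> nat \<Rightarrow> 'a::comm_monoid_add"
  assumes "is_partition nu" "1 \<le> l" "l \<le> n"
  shows "(\<Sum>y=1..n+1-l. f (y + (l - 1)) (conj (trunc_part n nu l) y)) = (\<Sum>m=l..n. f m (conj nu m))"
    and "(\<Sum>y=1..<n+1-l. f (y + (l - 1)) (conj (trunc_part n nu l) y)) = (\<Sum>m=l..<n. f m (conj nu m))"
proof -
  have range: "{1 + (l - 1)..n + 1 - l + (l - 1)} = {l..n}" "{1 + (l - 1)..<n + 1 - l + (l - 1)} = {l..<n}"
    using assms(2,3) by auto
  have column: "conj (trunc_part n nu l) y = conj nu (y + (l - 1))" if "1 \<le> y" "y \<le> n + 1 - l" for y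
    using conj_trunc_part[OF assms(1,2) that(1)] that(2) assms(2) by (simp add: add.commute)
  have "(\<Sum>m=l..n. f m (conj nu m)) = (\<Sum>y=1..n+1-l. f (y + (l - 1)) (conj nu (y + (l - 1))))"
    by (rule sum.shift_bounds_cl_nat_ivl[of _ 1 "l - 1" "n + 1 - l", unfolded range])
  also have "\<dots> = (\<Sum>y=1..n+1-l. f (y + (l - 1)) (conj (trunc_part n nu l) y))"
    by (rule sum.cong) (simp_all add: column)
  finally show "(\<Sum>y=1..n+1-l. f (y + (l - 1)) (conj (trunc_part n nu l) y)) = (\<Sum>m=l..n. f m (conj nu m))" ..
  have "(\<Sum>m=l..<n. f m (conj nu m)) = (\<Sum>y=1..<n+1-l. f (y + (l - 1)) (conj nu (y + (l - 1))))"
    by (rule sum.shift_bounds_nat_ivl[of _ 1 "l - 1" "n + 1 - l", unfolded range])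
  also have "\<dots> = (\<Sum>y=1..<n+1-l. f (y + (l - 1)) (conj (trunc_part n nu l) y))"
    by (rule sum.cong) (simp_all add: column)
  finally show "(\<Sum>y=1..<n+1-l. f (y + (l - 1)) (conj (trunc_part n nu l) y)) = (\<Sum>m=l..<n. f m (conj nu m))" ..
qed

lemma corner_color_eq:
  "1 \<le> l \<Longrightarrow> corner_color n k l (x, y) = rep n (int x - int (y + (l - 1)) + int k)"
  by (simp add: corner_color_def algebra_simps)

lemma corner_balance_trunc_part:
  assumes "is_partition nu" "nu 1 < n" "1 \<le> l" "l \<le> n"
  shows "int (card {z \<in> concave_corners (trunc_part n nu l). corner_color n k l z = j})
       - int (card {z \<in> convex_corners (trunc_part n nu l). corner_color n k l z = j})
     = int (card {m \<in> {l..n}. rep n (int (conj nu m) - int m + int k + 1) = j})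
       - int (card {m \<in> {l..<n}. rep n (int (conj nu m) - int m + int k) = j})"
proof -
  define N where "N = n + 1 - l"
  define G where "G = conj (trunc_part n nu l)"
  define A :: "nat \<Rightarrow> int" where "A y = of_bool (rep n (int (G y) - int (y + (l - 1)) + int k + 1) = j)" for y
  define B :: "nat \<Rightarrow> int" where "B y = of_bool (rep n (int (G y) - int (y + (l - 1)) + int k) = j)" for y
  have N: "1 \<le> N" using assms(4) by (simp add: N_def)
  have vanish: "\<forall>y\<ge>N. conj (trunc_part n nu l) y = 0"
    using conj_trunc_part_eq_0[OF assms] by (simp add: N_def)
  have "G (Suc y) \<le> G y" if "1 \<le> y" for y
    unfolding G_def using conj_trunc_part_antimono[OF assms(1,3) that] .
  moreover have "A (Suc y) = B y" if "G (Suc y) = G y" for y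
    using that by (simp add: A_def B_def algebra_simps)
  moreover have "int (card {z \<in> concave_corners (trunc_part n nu l). corner_color n k l z = j})
      = (\<Sum>y=1..N. if y = 1 \<or> G y < G (y - 1) then A y else 0)"
  proof -
    have "int (card {z \<in> concave_corners (trunc_part n nu l). corner_color n k l z = j})
      = (\<Sum>y=1..N. if y = 1 \<or> G y < G (y - 1) then of_bool (corner_color n k l (G y + 1, y) = j) else 0)"
      unfolding G_def by (rule card_colored_concave_corners[OF N vanish])
    then show ?thesis using assms(3) by (simp add: corner_color_eq A_def algebra_simps cong: if_cong)
  qed
  moreover have "int (card {z \<in> convex_corners (trunc_part n nu l). corner_color n k l z = j})
      = (\<Sum>y=1..<N. if G (Suc y) < G y then B y else 0)"
  proof -
    have "int (card {z \<in> convex_corners (trunc_part n nu l). corner_color n k l z = j})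
      = (\<Sum>y=1..<N. if G (Suc y) < G y then of_bool (corner_color n k l (G y, y) = j) else 0)"
      unfolding G_def by (rule card_colored_convex_corners[OF vanish])
    then show ?thesis using assms(3) by (simp add: corner_color_eq B_def cong: if_cong)
  qed
  moreover have "(\<Sum>y=1..N. A y) = int (card {m \<in> {l..n}. rep n (int (conj nu m) - int m + int k + 1) = j})"
  proof -
    have "(\<Sum>y=1..N. A y) = (\<Sum>m=l..n. of_bool (rep n (int (conj nu m) - int m + int k + 1) = j))"
      unfolding A_def G_def N_def
      by (rule sum_columns_trunc_part(1)[OF assms(1,3,4), of "\<lambda>m c. of_bool (rep n (int c - int m + int k + 1) = j)"])
    then show ?thesis by (simp add: Int_def)
  qed
  moreover have "(\<Sum>y=1..<N. B y) = int (card {m \<in> {l..<n}. rep n (int (conj nu m) - int m + int k) = j})"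
  proof -
    have "(\<Sum>y=1..<N. B y) = (\<Sum>m=l..<n. of_bool (rep n (int (conj nu m) - int m + int k) = j))"
      unfolding B_def G_def N_def
      by (rule sum_columns_trunc_part(2)[OF assms(1,3,4), of "\<lambda>m c. of_bool (rep n (int c - int m + int k) = j)"])
    then show ?thesis by (simp add: Int_def)
  qed
  ultimately show ?thesis
    using sum_corner_terms_telescope[of G A B N] by simp
qed

section \<open>Colorless partitions and the permutation \<open>\<tau>\<close>\<close>

lemma rep_eq_iff:
  assumes "0 < n" "1 \<le> j" "j \<le> int n"
  shows "rep n a = j \<longleftrightarrow> a mod int n = j mod int n"
proof -
  have "(j - 1) mod int n = j - 1" using assms by simp
  then have "rep n a = j \<longleftrightarrow> (a - 1) mod int n = (j - 1) mod int n" unfolding rep_def by auto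
  also have "\<dots> \<longleftrightarrow> a mod int n = j mod int n" by (simp add: mod_eq_dvd_iff)
  finally show ?thesis .
qed

lemma rep_add_one_eq_iff:
  assumes "0 < n" "1 \<le> j" "j \<le> n"
  shows "rep n (a + 1) = int j \<longleftrightarrow> rep n a = (if j = 1 then int n else int j - 1)"
proof -
  have "rep n (a + 1) = int j \<longleftrightarrow> (a + 1) mod int n = int j mod int n"
    using rep_eq_iff[of n "int j"] assms by simp
  also have "\<dots> \<longleftrightarrow> a mod int n = (if j = 1 then int n else int j - 1) mod int n"
    by (auto simp: mod_eq_dvd_iff algebra_simps)
  also have "\<dots> \<longleftrightarrow> rep n a = (if j = 1 then int n else int j - 1)"
    using rep_eq_iff[OF assms(1)] assms by simp
  finally show ?thesis .
qed

lemma eq_if_int_mod_eq: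
  assumes "y \<in> {1..n}" "y' \<in> {1..n}" "int y mod int n = int y' mod int n"
  shows "y = y'"
proof (rule ccontr)
  assume "y \<noteq> y'"
  then have "int y - int y' \<noteq> 0" by simp
  moreover have "int n dvd int y - int y'" using assms(3) by (simp add: mod_eq_dvd_iff)
  ultimately have "\<bar>int n\<bar> \<le> \<bar>int y - int y'\<bar>" using dvd_imp_le_int by blast
  then show False using assms(1,2) by auto
qed

lemma card_residue_class:
  assumes "0 < n"
  shows "card {y \<in> {1..n}. (a - int y) mod int n = i mod int n} = 1"
proof -
  define y0 where "y0 = nat ((a - i - 1) mod int n) + 1"
  have y0: "y0 \<in> {1..n}" "(a - int y0) mod int n = i mod int n"
  proof -
    have "0 \<le> (a - i - 1) mod int n" "(a - i - 1) mod int n < int n" using assms by auto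
    then show "y0 \<in> {1..n}" by (auto simp: y0_def)
    have "a - int y0 = i + ((a - i - 1) - (a - i - 1) mod int n)"
      using \<open>0 \<le> (a - i - 1) mod int n\<close> by (simp add: y0_def)
    then show "(a - int y0) mod int n = i mod int n" by (simp add: minus_mod_eq_mult_div)
  qed
  have "int y mod int n = int y0 mod int n" if "(a - int y) mod int n = i mod int n" for y
  proof -
    have "(a - int y) mod int n = (a - int y0) mod int n" using that y0(2) by simp
    then show ?thesis by (simp add: mod_eq_dvd_iff dvd_diff_commute)
  qed
  then have "{y \<in> {1..n}. (a - int y) mod int n = i mod int n} = {y0}"
    using y0 eq_if_int_mod_eq[of _ n y0] by blast
  then show ?thesis by simp
qed

lemma column_residue_count_diff:
  fixes a i :: int
  shows "(\<Sum>x=1..c. if (int x - a) mod int n = i mod int n then 1 else 0)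
       - (\<Sum>x=1..c. if (int x - a) mod int n = (i - 1) mod int n then 1 else 0)
       = (if (1 - a) mod int n = i mod int n then 1 else 0)
       - (if (int c + 1 - a) mod int n = i mod int n then 1 else (0::int))"
proof (induction c)
  case (Suc c)
  have "(int (Suc c) - a) mod int n = (i - 1) mod int n
      \<longleftrightarrow> (int (Suc c) + 1 - a) mod int n = i mod int n"
    by (simp add: mod_eq_dvd_iff algebra_simps)
  then show ?case using Suc.IH by (simp add: algebra_simps)
qed simp

lemma card_boxes_by_columns:
  assumes "is_partition p" "p 1 \<le> N"
  shows "card {(x, y) \<in> boxes p. P x y} = (\<Sum>y=1..N. card {x \<in> {1..conj p y}. P x y})"
proof -
  have box_iff: "(x, y) \<in> boxes p \<longleftrightarrow> y \<in> {1..N} \<and> x \<in> {1..conj p y}" for x y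
    using le_conj_iff[OF assms(1), of x y] partition_antimono[OF assms(1), of 1 x] assms(2)
    unfolding boxes_def by auto
  have "{(x, y) \<in> boxes p. P x y} = prod.swap ` (SIGMA y:{1..N}. {x \<in> {1..conj p y}. P x y})"
    by (auto simp: box_iff image_iff)
  then have "card {(x, y) \<in> boxes p. P x y} = card (SIGMA y:{1..N}. {x \<in> {1..conj p y}. P x y})"
    by (simp add: card_image)
  then show ?thesis by simp
qed

lemma colorless_card_content_residue:
  assumes "is_partition nu" "nu 1 < n" "colorless n nu"
  shows "card {y \<in> {1..n}. (int (conj nu y) + 1 - int y) mod int n = i mod int n} = 1"
proof -
  let ?col = "\<lambda>i y. \<Sum>x=1..conj nu y. if (int x - int y) mod int n = i mod int n then 1 else (0::int)"
  have count: "int (card {(x, y) \<in> boxes nu. (int x - int y) mod int n = i mod int n}) = (\<Sum>y=1..n. ?col i y)" for i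
  proof -
    have "card {(x, y) \<in> boxes nu. (int x - int y) mod int n = i mod int n}
        = (\<Sum>y=1..n. card {x \<in> {1..conj nu y}. (int x - int y) mod int n = i mod int n})"
      using assms(2) by (intro card_boxes_by_columns[OF assms(1)]) simp
    then show ?thesis
      by (simp only: of_nat_sum int_card_filter_eq_sum[OF finite_atLeastAtMost])
  qed
  let ?ind = "\<lambda>a y. if (a - int y) mod int n = i mod int n then 1 else (0::int)"
  have "card {(x, y) \<in> boxes nu. (int x - int y) mod int n = i mod int n}
      = card {(x, y) \<in> boxes nu. (int x - int y) mod int n = (i - 1) mod int n}"
    using assms(3) unfolding colorless_def by blast
  then have "0 = (\<Sum>y=1..n. ?col i y) - (\<Sum>y=1..n. ?col (i - 1) y)"
    using count[of i] count[of "i - 1"] by simp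
  also have "\<dots> = (\<Sum>y=1..n. ?col i y - ?col (i - 1) y)"
    by (rule sum_subtractf[symmetric])
  also have "\<dots> = (\<Sum>y=1..n. ?ind 1 y - ?ind (int (conj nu y) + 1) y)"
    by (rule sum.cong[OF refl]) (simp only: column_residue_count_diff add_diff_eq)
  also have "\<dots> = (\<Sum>y=1..n. ?ind 1 y) - (\<Sum>y=1..n. ?ind (int (conj nu y) + 1) y)"
    by (rule sum_subtractf)
  also have "(\<Sum>y=1..n. ?ind 1 y) = int (card {y \<in> {1..n}. (1 - int y) mod int n = i mod int n})"
    by (rule int_card_filter_eq_sum[symmetric]) simp
  also have "\<dots> = 1"
    using card_residue_class[of n 1 i] assms(2) by simp
  also have "(\<Sum>y=1..n. ?ind (int (conj nu y) + 1) y)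
      = int (card {y \<in> {1..n}. (int (conj nu y) + 1 - int y) mod int n = i mod int n})"
    by (rule int_card_filter_eq_sum[symmetric]) simp
  finally show ?thesis by linarith
qed

lemma tau_unique:
  assumes "is_partition nu" "nu 1 < n" "colorless n nu" "1 \<le> j" "j \<le> int n"
  shows "{m \<in> {1..n}. rep n (int (conj nu m) - int m + int k) = j} = {tau n k nu j}"
proof -
  let ?S = "{m \<in> {1..n}. rep n (int (conj nu m) - int m + int k) = j}"
  have "rep n (int (conj nu m) - int m + int k) = j
      \<longleftrightarrow> (int (conj nu m) + 1 - int m) mod int n = (j - int k + 1) mod int n" for m
    using rep_eq_iff[of n j] assms(2,4,5) by (simp add: mod_eq_dvd_iff algebra_simps)
  then have "card ?S = 1"
    using colorless_card_content_residue[OF assms(1-3)] by simp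
  then obtain t where S: "?S = {t}" by (rule card_1_singletonE)
  then have "tau n k nu j = t"
    unfolding tau_def by (intro the_equality) blast+
  with S show ?thesis by simp
qed

lemma tau_mem:
  assumes "is_partition nu" "nu 1 < n" "colorless n nu" "1 \<le> j" "j \<le> int n"
  shows "tau n k nu j \<in> {1..n}"
  using tau_unique[OF assms, of k] by blast

lemma card_content_color:
  assumes "is_partition nu" "nu 1 < n" "colorless n nu" "1 \<le> j" "j \<le> int n" "A \<subseteq> {1..n}"
  shows "card {m \<in> A. rep n (int (conj nu m) - int m + int k) = j} = of_bool (tau n k nu j \<in> A)"
proof -
  have "{m \<in> A. rep n (int (conj nu m) - int m + int k) = j} = A \<inter> {tau n k nu j}"
    using tau_unique[OF assms(1-5), of k] assms(6) by blast
  then show ?thesis by simp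
qed

section \<open>Counting corners by colour\<close>

lemma corner_balance_colorless:
  assumes "is_partition nu" "nu 1 < n" "colorless n nu" "1 \<le> l" "l \<le> n" "1 \<le> j" "j \<le> n"
  shows "int (card {z \<in> concave_corners (trunc_part n nu l). corner_color n k l z = int j})
       - int (card {z \<in> convex_corners (trunc_part n nu l). corner_color n k l z = int j})
     = of_bool (l \<le> tau n k nu (if j = 1 then int n else int j - 1))
       - of_bool (l \<le> tau n k nu (int j) \<and> tau n k nu (int j) < n)"
proof -
  let ?prev = "if j = 1 then int n else int j - 1"
  have n: "0 < n" using assms(2) by simp
  have prev: "1 \<le> ?prev" "?prev \<le> int n" using assms(6,7) by auto
  have sub: "{l..n} \<subseteq> {1..n}" "{l..<n} \<subseteq> {1..n}" using assms(4) by auto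
  have "tau n k nu ?prev \<in> {1..n}" using tau_mem[OF assms(1-3) prev] .
  moreover have "{m \<in> {l..n}. rep n (int (conj nu m) - int m + int k + 1) = int j}
      = {m \<in> {l..n}. rep n (int (conj nu m) - int m + int k) = ?prev}"
    using rep_add_one_eq_iff[OF n assms(6,7)] by simp
  ultimately have concave: "card {m \<in> {l..n}. rep n (int (conj nu m) - int m + int k + 1) = int j}
      = of_bool (l \<le> tau n k nu ?prev)"
    using card_content_color[OF assms(1-3) prev sub(1), of k] by simp
  have "card {m \<in> {l..<n}. rep n (int (conj nu m) - int m + int k) = int j}
      = of_bool (l \<le> tau n k nu (int j) \<and> tau n k nu (int j) < n)"
    using card_content_color[OF assms(1-3) _ _ sub(2), of "int j" k] assms(6,7) by simp
  with concave show ?thesis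
    using corner_balance_trunc_part[OF assms(1,2,4,5), of k "int j"] by simp
qed

lemma sum_prefix_differences:
  fixes f :: "nat \<Rightarrow> int"
  assumes "1 \<le> t" "t \<le> n"
  shows "(\<Sum>l=2..n. (f (l - 1) - f l) * of_bool (l \<le> t)) = f 1 - f t"
proof -
  have "{2..n} \<inter> {l. l \<le> t} = {2..t}" using assms by auto
  moreover have "(\<Sum>l=2..t. f (l - 1) - f l) = f 1 - f t"
    using assms(1) by (induction t rule: nat_induct_at_least) simp_all
  ultimately show ?thesis by simp
qed

lemma tau_eq_n_iff:
  assumes "is_partition nu" "nu 1 < n" "colorless n nu" "k \<in> {1..n}" "j \<in> {1..n}"
  shows "tau n k nu (int j) = n \<longleftrightarrow> j = k"
proof -
  have "n \<in> {m \<in> {1..n}. rep n (int (conj nu m) - int m + int k) = int j} \<longleftrightarrow> n = tau n k nu (int j)"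
    using tau_unique[OF assms(1-3), of "int j" k] assms(5) by simp
  moreover have "rep n (int (conj nu n) - int n + int k) = int k"
    using conj_eq_0[OF assms(1,2)] rep_eq_iff[of n "int k"] assms(2,4) by simp
  ultimately show ?thesis using assms(2) by auto
qed

lemma num_CC_minus_num_CV:
  fixes k :: nat
  assumes "is_partition nu" "nu 1 < n" "colorless n nu" "j \<in> {1..n}"
  defines "a \<equiv> tau n k nu (if j = 1 then int n else int j - 1)"
    and "b \<equiv> tau n k nu (int j)"
  shows "num_CC n k nu mu (int j) - num_CV n k nu mu (int j)
       = (int (conj mu 1) - int (conj mu a)) - of_bool (b < n) * (int (conj mu 1) - int (conj mu b))"
proof -
  let ?w = "\<lambda>l. int (conj mu (l - 1)) - int (conj mu l)"
  have "a \<in> {1..n}" "b \<in> {1..n}"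
    using tau_mem[OF assms(1-3)] assms(4) unfolding a_def b_def by auto
  have "num_CC n k nu mu (int j) - num_CV n k nu mu (int j)
      = (\<Sum>l=2..n. ?w l * (of_bool (l \<le> a) - of_bool (l \<le> b \<and> b < n)))"
    unfolding num_CC_def num_CV_def a_def b_def sum_subtractf[symmetric] right_diff_distrib[symmetric]
    using corner_balance_colorless[OF assms(1-3)] assms(4) by (intro sum.cong) auto
  also have "\<dots> = (\<Sum>l=2..n. ?w l * of_bool (l \<le> a)) - of_bool (b < n) * (\<Sum>l=2..n. ?w l * of_bool (l \<le> b))"
    by (simp add: right_diff_distrib sum_subtractf sum_distrib_left ac_simps)
  finally show ?thesis
    using sum_prefix_differences[of _ n "\<lambda>l. int (conj mu l)"] \<open>a \<in> {1..n}\<close> \<open>b \<in> {1..n}\<close> by simp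
qed

theorem mainTheorem14:
  fixes n k :: nat and nu mu :: "nat \<Rightarrow> nat"
  assumes "n \<ge> 3" and "k \<in> {1..n}"
    and "is_partition nu" and "colorless n nu" and "nu 1 < n"
    and "is_partition mu" and "mu 1 < n"
  shows "\<forall>j \<in> {1..n}.
    num_CC n k nu mu (int j) - num_CV n k nu mu (int j)
    = int (conj mu (tau n k nu (int j))) - int (conj mu (tau n k nu (if j = 1 then int n else int j - 1)))
      + (if j = k then int (conj mu 1) else 0)"
proof
  fix j assume j: "j \<in> {1..n}"
  let ?b = "tau n k nu (int j)"
  have "?b \<le> n" using tau_mem[OF assms(3,5,4), of "int j" k] j by simp
  moreover have "?b = n \<longleftrightarrow> j = k" using tau_eq_n_iff[OF assms(3,5,4,2) j] .
  moreover have "conj mu n = 0" using conj_eq_0[OF assms(6,7)] .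
  ultimately show "num_CC n k nu mu (int j) - num_CV n k nu mu (int j)
    = int (conj mu ?b) - int (conj mu (tau n k nu (if j = 1 then int n else int j - 1)))
      + (if j = k then int (conj mu 1) else 0)"
    using num_CC_minus_num_CV[OF assms(3,5,4) j, of k mu] by auto
qed

end
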